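(* Let $a$ be a polynomial of degree $n$ with $\int_0^1 a(x)\,dx=0$, so that $(a,0)\in\mathcal U_{n/n+1}$. Then the Zariski tangent space $T_{(a,0)}\mathcal U_{n/n+1}$ is a vector space of dimension $n+1$, consisting of the pairs of polynomials $(p,q)$ of degree at most $n$ such that $q$ and $a$ are co-linear (i.e. $q\in\mathbb C\cdot a$) and $\int_0^1 p(x)\,dx=0$.
   Context: Work over $\mathbb C$. Let $\mathcal A_n\cong\mathbb C^{2n+2}$ be the vector space of pairs $(a,b)$ of polynomials of degree at most $n$ (identified with Abel equations $\frac{dy}{dx}=a(x)y^2+b(x)y^3$). The set $\mathcal U_{n/n+1}\subset\mathcal A_n$ is the set of pairs $(a,b)$ with $\deg a,\deg b\leq n$, $\int_0^1 a(x)dx=\int_0^1 b(x)dx=0$, and $a,b$ co-linear polynomials (linearly dependent over $\mathbb C$). *)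

theory Defs
  imports "HOL-Analysis.Analysis" "HOL-Computational_Algebra.Polynomial"
begin

type_synonym abelpair = "complex poly \<times> complex poly"

text \<open>The space A_n of pairs (a,b) of complex polynomials of degree at most n,
  with coordinates the coefficients (a_0..a_n, b_0..b_n), i.e. C^(2n+2).\<close>
definition A_space :: "nat \<Rightarrow> abelpair set" where
  "A_space n = {(a, b). degree a \<le> n \<and> degree b \<le> n}"

definition int01 :: "complex poly \<Rightarrow> complex" where
  "int01 p = integral {0..1} (\<lambda>x::real. poly p (complex_of_real x))"

definition colinear :: "complex poly \<Rightarrow> complex poly \<Rightarrow> bool" where
  "colinear p q \<longleftrightarrow> (\<exists>c1 c2. (c1 \<noteq> 0 \<or> c2 \<noteq> 0) \<and> smult c1 p + smult c2 q = 0)"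

definition U_set :: "nat \<Rightarrow> abelpair set" where
  "U_set n = {(a, b) \<in> A_space n. int01 a = 0 \<and> int01 b = 0 \<and> colinear a b}"

inductive polyfun :: "nat \<Rightarrow> (abelpair \<Rightarrow> complex) \<Rightarrow> bool" for n where
  pf_const: "polyfun n (\<lambda>_. c)"
| pf_coordA: "i \<le> n \<Longrightarrow> polyfun n (\<lambda>x. coeff (fst x) i)"
| pf_coordB: "i \<le> n \<Longrightarrow> polyfun n (\<lambda>x. coeff (snd x) i)"
| pf_add: "polyfun n f \<Longrightarrow> polyfun n g \<Longrightarrow> polyfun n (\<lambda>x. f x + g x)"
| pf_mult: "polyfun n f \<Longrightarrow> polyfun n g \<Longrightarrow> polyfun n (\<lambda>x. f x * g x)"

definition pscale :: "complex \<Rightarrow> abelpair \<Rightarrow> abelpair" where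
  "pscale c v = (smult c (fst v), smult c (snd v))"

definition zariski_tangent :: "nat \<Rightarrow> abelpair set \<Rightarrow> abelpair \<Rightarrow> abelpair set" where
  "zariski_tangent n V P =
     {v \<in> A_space n. \<forall>f. polyfun n f \<and> (\<forall>x\<in>V. f x = 0) \<longrightarrow>
        deriv (\<lambda>t::complex. f (fst P + smult t (fst v), snd P + smult t (snd v))) 0 = 0}"

end

theory Submission
  imports Defs
begin

(* The pairs in U are cut out, among pairs of polynomials of degree at most n with zero mean,
   by the 2x2 minors a_i b_j - a_j b_i. Differentiating the mean and the minors at (a, 0) in
   direction (p, q) gives int01 p = 0 and a_i q_j = a_j q_i; as a_n is nonzero this forces
   q = (q_n / a_n) a. Conversely, for (p, c a) with int01 p = 0 the curve
   t |-> (a + t p, t c (a + t p)) lies in U and has velocity (p, c a) at t = 0, and the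
   derivative of a polynomial function along a curve depends only on its velocity.
   A basis of the tangent space is (x^k - 1/(k+1), 0) for 1 <= k <= n together with (0, a). *)

lemma has_integral_power:
  fixes a b :: real
  assumes "a \<le> b"
  shows "((\<lambda>x. x ^ k) has_integral (b ^ Suc k - a ^ Suc k) / Suc k) {a..b}"
proof -
  have "((\<lambda>x. x ^ Suc k / Suc k) has_real_derivative x ^ k) (at x within {a..b})" for x :: real
    using DERIV_cdivide[OF DERIV_pow[of "Suc k" x], of "Suc k"] by (simp del: of_nat_Suc)
  then show ?thesis
    using fundamental_theorem_of_calculus[OF assms, of "\<lambda>x. x ^ Suc k / Suc k"]
    by (simp add: has_real_derivative_iff_has_vector_derivative diff_divide_distrib del: of_nat_Suc)
qed

lemma has_integral_of_real_power_01:
  "((\<lambda>x::real. complex_of_real x ^ k) has_integral 1 / of_nat (Suc k)) {0..1}"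
proof -
  have "((\<lambda>x::real. x ^ k) has_integral 1 / real (Suc k)) {0..1}"
    using has_integral_power[of 0 1 k] by simp
  from has_integral_of_real[OF this, where 'b=complex] show ?thesis by (simp add: of_real_divide)
qed

lemma poly_eq_sum_coeff:
  fixes p :: "'a::comm_semiring_1 poly"
  assumes "degree p \<le> N"
  shows "poly p x = (\<Sum>i\<le>N. coeff p i * x ^ i)"
  unfolding poly_altdef
  by (rule sum.mono_neutral_left) (use assms in \<open>auto simp: coeff_eq_0\<close>)

lemma int01_eq_sum_coeff:
  assumes "degree p \<le> N"
  shows "int01 p = (\<Sum>i\<le>N. coeff p i / of_nat (Suc i))"
proof -
  have "((\<lambda>x::real. \<Sum>i\<le>N. coeff p i * complex_of_real x ^ i)
          has_integral (\<Sum>i\<le>N. coeff p i * (1 / of_nat (Suc i)))) {0..1}"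
    by (intro has_integral_sum has_integral_mult_right has_integral_of_real_power_01) auto
  then show ?thesis
    unfolding int01_def poly_eq_sum_coeff[OF assms] by (simp add: integral_unique)
qed

lemma int01_add: "int01 (p + q) = int01 p + int01 q"
proof -
  define N where "N = max (degree p) (degree q)"
  have "degree (p + q) \<le> N" "degree p \<le> N" "degree q \<le> N"
    unfolding N_def by (auto intro: degree_add_le_max order.trans)
  then show ?thesis by (simp add: int01_eq_sum_coeff add_divide_distrib sum.distrib)
qed

lemma int01_smult: "int01 (smult c p) = c * int01 p"
  using int01_eq_sum_coeff[of "smult c p" "degree p"] int01_eq_sum_coeff[of p "degree p"]
  by (simp add: sum_distrib_left)

lemma int01_0 [simp]: "int01 0 = 0"
  using int01_smult[of 0 0] by simp

lemma int01_diff: "int01 (p - q) = int01 p - int01 q"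
  using int01_add[of "p - q" q] by simp

lemma int01_sum: "int01 (\<Sum>i\<in>A. f i) = (\<Sum>i\<in>A. int01 (f i))"
  by (induction A rule: infinite_finite_induct) (simp_all add: int01_add)

lemma int01_const: "int01 [:c:] = c"
  using int01_eq_sum_coeff[of "[:c:]" 0] by simp

lemma int01_monom: "int01 (monom 1 k) = 1 / of_nat (Suc k)"
  unfolding int01_def poly_monom using has_integral_of_real_power_01 by (simp add: integral_unique)

lemma polyfun_diff: "polyfun n f \<Longrightarrow> polyfun n g \<Longrightarrow> polyfun n (\<lambda>x. f x - g x)"
  using pf_add[OF _ pf_mult[OF pf_const[of n "-1"]], of f g] by simp

lemma polyfun_sum:
  "(\<And>i. i \<in> A \<Longrightarrow> polyfun n (g i)) \<Longrightarrow> polyfun n (\<lambda>x. \<Sum>i\<in>A. g i x)"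
  by (induction A rule: infinite_finite_induct) (auto intro: pf_const pf_add)

definition curve_tangent :: "(complex \<Rightarrow> abelpair) \<Rightarrow> abelpair \<Rightarrow> abelpair \<Rightarrow> bool" where
  "curve_tangent \<gamma> P v \<longleftrightarrow> \<gamma> 0 = P \<and>
     (\<forall>i. ((\<lambda>t. coeff (fst (\<gamma> t)) i) has_field_derivative coeff (fst v) i) (at 0)) \<and>
     (\<forall>i. ((\<lambda>t. coeff (snd (\<gamma> t)) i) has_field_derivative coeff (snd v) i) (at 0))"

lemma curve_tangent_line:
  "curve_tangent (\<lambda>t. (fst P + smult t (fst v), snd P + smult t (snd v))) P v"
  unfolding curve_tangent_def by (auto intro!: derivative_eq_intros)

lemma polyfun_has_derivative_along_curves:
  assumes "polyfun n f"
  shows "\<exists>D. \<forall>\<gamma>. curve_tangent \<gamma> P v \<longrightarrow> ((\<lambda>t. f (\<gamma> t)) has_field_derivative D) (at 0)"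
  using assms
proof induction
  case (pf_const c)
  show ?case by (auto intro: DERIV_const)
next
  case (pf_coordA i)
  show ?case unfolding curve_tangent_def by blast
next
  case (pf_coordB i)
  show ?case unfolding curve_tangent_def by blast
next
  case (pf_add f g)
  then obtain Df Dg
    where "\<forall>\<gamma>. curve_tangent \<gamma> P v \<longrightarrow> ((\<lambda>t. f (\<gamma> t)) has_field_derivative Df) (at 0)"
      and "\<forall>\<gamma>. curve_tangent \<gamma> P v \<longrightarrow> ((\<lambda>t. g (\<gamma> t)) has_field_derivative Dg) (at 0)"
    by blast
  then show ?case by (intro exI[of _ "Df + Dg"]) (auto intro: DERIV_add)
next
  case (pf_mult f g)
  then obtain Df Dg
    where f: "\<forall>\<gamma>. curve_tangent \<gamma> P v \<longrightarrow> ((\<lambda>t. f (\<gamma> t)) has_field_derivative Df) (at 0)"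
      and g: "\<forall>\<gamma>. curve_tangent \<gamma> P v \<longrightarrow> ((\<lambda>t. g (\<gamma> t)) has_field_derivative Dg) (at 0)"
    by blast
  have "((\<lambda>t. f (\<gamma> t) * g (\<gamma> t)) has_field_derivative Df * g P + Dg * f P) (at 0)"
    if "curve_tangent \<gamma> P v" for \<gamma>
    using DERIV_mult[OF f[rule_format, OF that] g[rule_format, OF that]] that
    by (simp add: curve_tangent_def)
  then show ?case by blast
qed

lemma deriv_polyfun_curves_eq:
  assumes "polyfun n f" and "curve_tangent \<gamma> P v" and "curve_tangent \<eta> P v"
  shows "deriv (\<lambda>t. f (\<gamma> t)) 0 = deriv (\<lambda>t. f (\<eta> t)) 0"
  using polyfun_has_derivative_along_curves[OF assms(1), of P v] assms(2,3)
  by (metis DERIV_imp_deriv)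

lemma zariski_tangent_deriv_eq_0:
  assumes "v \<in> zariski_tangent n V P" and "polyfun n f" and "\<forall>x\<in>V. f x = 0"
  shows "deriv (\<lambda>t. f (fst P + smult t (fst v), snd P + smult t (snd v))) 0 = 0"
  using assms unfolding zariski_tangent_def by blast

lemma curve_tangent_in_zariski_tangent:
  assumes "v \<in> A_space n" and "curve_tangent \<gamma> P v" and "\<And>t. \<gamma> t \<in> V"
  shows "v \<in> zariski_tangent n V P"
proof -
  have "deriv (\<lambda>t. f (fst P + smult t (fst v), snd P + smult t (snd v))) 0 = 0"
    if "polyfun n f" and "\<forall>x\<in>V. f x = 0" for f
  proof -
    have "deriv (\<lambda>t. f (fst P + smult t (fst v), snd P + smult t (snd v))) 0
        = deriv (\<lambda>t. f (\<gamma> t)) 0"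
      using deriv_polyfun_curves_eq[OF that(1) curve_tangent_line assms(2)] .
    also have "\<dots> = deriv (\<lambda>_. 0) 0"
      using that(2) assms(3) by simp
    finally show ?thesis by simp
  qed
  with assms(1) show ?thesis unfolding zariski_tangent_def by blast
qed

definition minor :: "nat \<Rightarrow> nat \<Rightarrow> abelpair \<Rightarrow> complex" where
  "minor i j x = coeff (fst x) i * coeff (snd x) j - coeff (fst x) j * coeff (snd x) i"

lemma polyfun_minor: "i \<le> n \<Longrightarrow> j \<le> n \<Longrightarrow> polyfun n (minor i j)"
  unfolding minor_def by (intro polyfun_diff pf_mult pf_coordA pf_coordB)

lemma minor_eq_0_if_colinear:
  assumes "colinear p q"
  shows "minor i j (p, q) = 0"
proof -
  obtain c1 c2 where nz: "c1 \<noteq> 0 \<or> c2 \<noteq> 0" and rel: "smult c1 p + smult c2 q = 0"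
    using assms unfolding colinear_def by blast
  have "c1 * coeff p k + c2 * coeff q k = 0" for k
    using arg_cong[OF rel, of "\<lambda>r. coeff r k"] by simp
  from this[of i] this[of j] have "c1 * minor i j (p, q) = 0" and "c2 * minor i j (p, q) = 0"
    unfolding minor_def fst_conv snd_conv by algebra+
  with nz show ?thesis by auto
qed

lemma deriv_minor_along_line:
  "deriv (\<lambda>t. minor i j (a + smult t p, b + smult t q)) 0
     = coeff a i * coeff q j + coeff p i * coeff b j - coeff a j * coeff q i - coeff p j * coeff b i"
  unfolding minor_def by (rule DERIV_imp_deriv) (auto intro!: derivative_eq_intros)

definition tangent_model :: "nat \<Rightarrow> complex poly \<Rightarrow> abelpair set" where
  "tangent_model n a =
     {(p, q). degree p \<le> n \<and> degree q \<le> n \<and> (\<exists>c. q = smult c a) \<and> int01 p = 0}"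

definition int01_coords :: "nat \<Rightarrow> abelpair \<Rightarrow> complex" where
  "int01_coords n x = (\<Sum>i\<le>n. coeff (fst x) i / of_nat (Suc i))"

lemma polyfun_int01_coords: "polyfun n (int01_coords n)"
  unfolding int01_coords_def divide_inverse by (intro polyfun_sum pf_mult pf_coordA pf_const) simp

lemma int01_coords_eq_int01: "degree (fst x) \<le> n \<Longrightarrow> int01_coords n x = int01 (fst x)"
  unfolding int01_coords_def by (simp add: int01_eq_sum_coeff)

lemma degree_add_smult_le:
  "degree a \<le> n \<Longrightarrow> degree p \<le> n \<Longrightarrow> degree (a + smult t p) \<le> n"
  by (meson degree_add_le degree_smult_le order.trans)

lemma colinear_smult_right: "colinear p (smult c p)"
  unfolding colinear_def by (intro exI[of _ c] exI[of _ "-1"]) simp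

lemma eq_smult_if_minors_vanish:
  fixes a q :: "'a::field poly"
  assumes "a \<noteq> 0" and "degree a = n" and "degree q \<le> n"
    and "\<And>j. j \<le> n \<Longrightarrow> coeff a n * coeff q j = coeff a j * coeff q n"
  shows "q = smult (coeff q n / coeff a n) a"
proof (rule poly_eqI)
  fix j
  have "coeff a n \<noteq> 0" using assms(1,2) by auto
  then show "coeff q j = coeff (smult (coeff q n / coeff a n) a) j"
    using assms(4)[of j] assms(2,3) by (cases "j \<le> n") (auto simp: field_simps coeff_eq_0)
qed

lemma zariski_tangent_U_int01:
  assumes "v \<in> zariski_tangent n (U_set n) (a, b)" and "degree a \<le> n"
  shows "int01 (fst v) = 0"
proof -
  obtain p q where v: "v = (p, q)" by fastforce
  have "degree p \<le> n"
    using assms(1) unfolding zariski_tangent_def A_space_def v by auto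
  then have "int01_coords n (a + smult t p, b + smult t q) = int01 a + t * int01 p" for t
    using degree_add_smult_le[of a n p t] assms(2)
    by (simp add: int01_coords_eq_int01 int01_add int01_smult)
  moreover have "\<forall>x\<in>U_set n. int01_coords n x = 0"
    by (auto simp: U_set_def A_space_def int01_coords_eq_int01)
  then have "deriv (\<lambda>t. int01_coords n (a + smult t p, b + smult t q)) 0 = 0"
    using zariski_tangent_deriv_eq_0[OF assms(1) polyfun_int01_coords] by (simp add: v)
  moreover have "deriv (\<lambda>t. int01 a + t * int01 p) 0 = int01 p"
    by (rule DERIV_imp_deriv) (auto intro!: derivative_eq_intros)
  ultimately show ?thesis by (simp add: v)
qed

lemma zariski_tangent_U_minor:
  assumes "v \<in> zariski_tangent n (U_set n) (a, b)" and "i \<le> n" and "j \<le> n"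
  shows "coeff a i * coeff (snd v) j + coeff (fst v) i * coeff b j
           - coeff a j * coeff (snd v) i - coeff (fst v) j * coeff b i = 0"
proof -
  have "\<forall>x\<in>U_set n. minor i j x = 0"
    using minor_eq_0_if_colinear by (auto simp: U_set_def)
  from zariski_tangent_deriv_eq_0[OF assms(1) polyfun_minor[OF assms(2,3)] this]
  show ?thesis by (simp only: fst_conv snd_conv deriv_minor_along_line)
qed

lemma zariski_tangent_subset_tangent_model:
  assumes "a \<noteq> 0" and "degree a = n"
  shows "zariski_tangent n (U_set n) (a, 0) \<subseteq> tangent_model n a"
proof
  fix v assume v: "v \<in> zariski_tangent n (U_set n) (a, 0)"
  obtain p q where v_eq: "v = (p, q)" by fastforce
  have deg: "degree p \<le> n" "degree q \<le> n"
    using v unfolding zariski_tangent_def A_space_def v_eq by auto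
  have "int01 p = 0"
    using zariski_tangent_U_int01[OF v] assms(2) by (simp add: v_eq)
  moreover have "q = smult (coeff q n / coeff a n) a"
  proof (rule eq_smult_if_minors_vanish[OF assms deg(2)])
    fix j assume "j \<le> n"
    from zariski_tangent_U_minor[OF v order.refl this]
    show "coeff a n * coeff q j = coeff a j * coeff q n" by (simp add: v_eq)
  qed
  ultimately show "v \<in> tangent_model n a"
    using deg unfolding tangent_model_def v_eq by blast
qed

lemma tangent_model_subset_zariski_tangent:
  assumes "degree a = n" and "int01 a = 0"
  shows "tangent_model n a \<subseteq> zariski_tangent n (U_set n) (a, 0)"
proof
  fix v assume "v \<in> tangent_model n a"
  then obtain p c where v: "v = (p, smult c a)" and deg: "degree p \<le> n" and int_p: "int01 p = 0"
    unfolding tangent_model_def by blast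
  define \<gamma> where "\<gamma> t = (a + smult t p, smult (t * c) (a + smult t p))" for t
  have "curve_tangent \<gamma> (a, 0) v"
    unfolding curve_tangent_def \<gamma>_def v by (auto intro!: derivative_eq_intros)
  moreover have "\<gamma> t \<in> U_set n" for t
  proof -
    have "degree (a + smult t p) \<le> n"
      using degree_add_smult_le[of a n p t] deg assms(1) by simp
    then show ?thesis
      unfolding \<gamma>_def U_set_def A_space_def
      using degree_smult_le[of "t * c" "a + smult t p"] colinear_smult_right
      by (auto simp: int01_add int01_smult assms(2) int_p)
  qed
  moreover have "v \<in> A_space n"
    unfolding A_space_def v using deg assms(1) degree_smult_le[of c a] by simp
  ultimately show "v \<in> zariski_tangent n (U_set n) (a, 0)"
    by (intro curve_tangent_in_zariski_tangent)
qed

interpretation pair_space: vector_space pscale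
  by unfold_locales (auto simp: pscale_def smult_add_right smult_add_left)

definition centered_monom :: "nat \<Rightarrow> complex poly" where
  "centered_monom k = monom 1 k - [:1 / of_nat (Suc k):]"

lemma int01_centered_monom: "int01 (centered_monom k) = 0"
  by (simp add: centered_monom_def int01_diff int01_monom int01_const)

lemma degree_centered_monom: "degree (centered_monom k) \<le> k"
  unfolding centered_monom_def
  using degree_diff_le_max[of "monom 1 k" "[:1 / of_nat (Suc k):]"] by (simp add: degree_monom_eq)

lemma coeff_centered_monom: "0 < j \<Longrightarrow> coeff (centered_monom k) j = (if j = k then 1 else 0)"
  by (auto simp: centered_monom_def coeff_monom coeff_pCons split: nat.split)

lemma sum_centered_monom_eq:
  assumes "degree p \<le> n" and "int01 p = 0"
  shows "(\<Sum>k\<in>{1..n}. smult (coeff p k) (centered_monom k)) = p"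
proof -
  define r where "r = p - (\<Sum>k\<in>{1..n}. smult (coeff p k) (centered_monom k))"
  have "coeff r j = 0" if "0 < j" for j
  proof -
    have "coeff r j = coeff p j - (\<Sum>k\<in>{1..n}. if k = j then coeff p k else 0)"
      unfolding r_def coeff_diff coeff_sum coeff_smult coeff_centered_monom[OF that]
      by (intro arg_cong[where f = "\<lambda>s. coeff p j - s"] sum.cong) auto
    also have "\<dots> = 0"
      using that assms(1) by (auto simp: coeff_eq_0)
    finally show ?thesis .
  qed
  then have "r = [:coeff r 0:]"
    by (intro poly_eqI) (auto simp: coeff_pCons split: nat.split)
  moreover have "int01 r = 0"
    by (simp add: r_def int01_diff int01_sum int01_smult int01_centered_monom assms(2))
  ultimately have "r = 0" by (metis int01_const pCons_0_0)
  then show ?thesis by (simp add: r_def)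
qed

definition tangent_basis :: "nat \<Rightarrow> complex poly \<Rightarrow> abelpair set" where
  "tangent_basis n a = insert (0, a) ((\<lambda>k. (centered_monom k, 0)) ` {1..n})"

lemma inj_on_centered_monom: "inj_on centered_monom {1..}"
proof (rule inj_onI)
  fix k l :: nat assume k: "k \<in> {1..}" and eq: "centered_monom k = centered_monom l"
  have "coeff (centered_monom l) k = 1"
    using coeff_centered_monom[of k k] k eq by simp
  then show "k = l"
    using coeff_centered_monom[of k l] k by (simp split: if_splits)
qed

lemma inj_on_centered_monom_pair: "inj_on (\<lambda>k. (centered_monom k, 0)) {1..n}"
  by (rule inj_onI) (auto dest: inj_onD[OF inj_on_centered_monom])

lemma tangent_basis_sum:
  assumes "a \<noteq> 0"
  shows "(\<Sum>v\<in>tangent_basis n a. f v) = f (0, a) + (\<Sum>k\<in>{1..n}. f (centered_monom k, 0))"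
proof -
  have "(0, a) \<notin> (\<lambda>k. (centered_monom k, 0)) ` {1..n}"
    using assms by auto
  then have "(\<Sum>v\<in>tangent_basis n a. f v) = f (0, a) + (\<Sum>v\<in>(\<lambda>k. (centered_monom k, 0)) ` {1..n}. f v)"
    unfolding tangent_basis_def by (intro sum.insert) auto
  also have "(\<Sum>v\<in>(\<lambda>k. (centered_monom k, 0)) ` {1..n}. f v) = (\<Sum>k\<in>{1..n}. f (centered_monom k, 0))"
    by (rule sum.reindex_cong[OF inj_on_centered_monom_pair refl refl])
  finally show ?thesis .
qed

lemma card_tangent_basis:
  assumes "a \<noteq> 0"
  shows "card (tangent_basis n a) = n + 1"
  unfolding card_eq_sum tangent_basis_sum[OF assms] by simp

lemma tangent_basis_subset_tangent_model:
  assumes "degree a \<le> n"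
  shows "tangent_basis n a \<subseteq> tangent_model n a"
proof
  fix v assume "v \<in> tangent_basis n a"
  then consider "v = (0, a)" | k where "k \<in> {1..n}" "v = (centered_monom k, 0)"
    unfolding tangent_basis_def by blast
  then show "v \<in> tangent_model n a"
  proof cases
    case 1
    have "\<exists>c. a = smult c a" by (rule exI[of _ 1]) simp
    then show ?thesis using 1 assms unfolding tangent_model_def by auto
  next
    case 2
    have "\<exists>c. 0 = smult c a" by (rule exI[of _ 0]) simp
    then show ?thesis
      using 2 degree_centered_monom[of k] int01_centered_monom[of k]
      unfolding tangent_model_def by auto
  qed
qed

lemma tangent_model_subset_span_tangent_basis:
  "tangent_model n a \<subseteq> pair_space.span (tangent_basis n a)"
proof
  fix v assume "v \<in> tangent_model n a"
  then obtain p c where v: "v = (p, smult c a)" and p: "degree p \<le> n" "int01 p = 0"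
    unfolding tangent_model_def by blast
  from p have "(\<Sum>k\<in>{1..n}. smult (coeff p k) (centered_monom k)) = p"
    by (rule sum_centered_monom_eq)
  then have "v = (\<Sum>k\<in>{1..n}. pscale (coeff p k) (centered_monom k, 0)) + pscale c (0, a)"
    by (simp add: v pscale_def fst_sum snd_sum prod_eq_iff)
  also have "\<dots> \<in> pair_space.span (tangent_basis n a)"
    by (intro pair_space.span_add pair_space.span_sum pair_space.span_scale pair_space.span_base)
      (auto simp: tangent_basis_def)
  finally show "v \<in> pair_space.span (tangent_basis n a)" .
qed

lemma independent_tangent_basis:
  assumes "a \<noteq> 0"
  shows "pair_space.independent (tangent_basis n a)"
proof -
  have "u v = 0" if sum0: "(\<Sum>v\<in>tangent_basis n a. pscale (u v) v) = 0"
    and v: "v \<in> tangent_basis n a" for u v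
  proof -
    let ?e = "\<lambda>k. (centered_monom k, 0 :: complex poly)"
    have "(\<Sum>v\<in>tangent_basis n a. pscale (u v) v)
        = pscale (u (0, a)) (0, a) + (\<Sum>k\<in>{1..n}. pscale (u (?e k)) (?e k))"
      by (rule tangent_basis_sum[OF assms])
    then have fst0: "(\<Sum>k\<in>{1..n}. smult (u (?e k)) (centered_monom k)) = 0"
      and snd0: "smult (u (0, a)) a = 0"
      using sum0 by (simp_all add: pscale_def prod_eq_iff fst_sum snd_sum)
    have "u (?e j) = 0" if "j \<in> {1..n}" for j
    proof -
      have "coeff (\<Sum>k\<in>{1..n}. smult (u (?e k)) (centered_monom k)) j = u (?e j)"
        unfolding coeff_sum coeff_smult using that
        by (simp add: coeff_centered_monom if_distrib[of "(*) _"] cong: if_cong)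
      with fst0 show ?thesis by simp
    qed
    moreover have "u (0, a) = 0" using snd0 assms by simp
    ultimately show ?thesis using v by (auto simp: tangent_basis_def)
  qed
  moreover have "finite (tangent_basis n a)"
    by (simp add: tangent_basis_def)
  ultimately show ?thesis
    using pair_space.dependent_finite by blast
qed

lemma dim_tangent_model:
  assumes "a \<noteq> 0" and "degree a \<le> n"
  shows "pair_space.dim (tangent_model n a) = n + 1"
  using tangent_basis_subset_tangent_model[OF assms(2)] tangent_model_subset_span_tangent_basis
    independent_tangent_basis[OF assms(1)] card_tangent_basis[OF assms(1)]
  by (rule pair_space.dim_unique)

theorem mainTheorem2:
  fixes a :: "complex poly" and n :: nat
  assumes "a \<noteq> 0" and "degree a = n" and "int01 a = 0"
  shows "zariski_tangent n (U_set n) (a, 0) =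
           {(p, q). degree p \<le> n \<and> degree q \<le> n \<and> (\<exists>c. q = smult c a) \<and> int01 p = 0}
         \<and> vector_space.dim pscale (zariski_tangent n (U_set n) (a, 0)) = n + 1"
proof -
  have "zariski_tangent n (U_set n) (a, 0) = tangent_model n a"
    using zariski_tangent_subset_tangent_model[OF assms(1,2)]
      tangent_model_subset_zariski_tangent[OF assms(2,3)]
    by (rule subset_antisym)
  moreover have "pair_space.dim (tangent_model n a) = n + 1"
    using assms(1,2) by (simp add: dim_tangent_model)
  ultimately show ?thesis
    by (simp add: tangent_model_def)
qed

end
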